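(* Let $0<\epsilon<\frac13$ and consider the 4-player instance in which $[0,1]$ is partitioned into 14 consecutive nondegenerate intervals, from left to right $J_1,J_2,J_3,J_4,\,I,\,J_5,J_6,J_7,J_8,\,J_9,\,K_1,K_2,K_3,K_4$, with nonatomic valuations: player 4 gives value $\frac14$ to each of $J_1,J_5,K_1,K_4$; player 3 gives $\frac{1-\epsilon}{3}$ to each of $J_3,J_7,J_9$ and $\epsilon$ to $I$; player 1 gives $\frac{1+\epsilon}{4}$ to each of $J_2,J_4$ and $\frac{1-\epsilon}{2}$ to $K_2$; player 2 gives $\frac{1+\epsilon}{4}$ to each of $J_6,J_8$ and $\frac{1-\epsilon}{2}$ to $K_3$. Then the partial division that discards $I$ and gives player 1 the interval $J_1\cup J_2\cup J_3\cup J_4$ (the first block, as one interval), player 2 the interval $J_5\cup\dots\cup J_8$, player 3 the interval $J_9$, and player 4 the interval $K_1\cup K_2\cup K_3\cup K_4$, is envy-free and has egalitarian welfare $\frac{1-\epsilon}{3}$. Consequently (together with the fact that every envy-free complete division of this instance has egalitarian welfare at most $\frac14$), this instance exhibits an egalitarian $\frac{4(1-\epsilon)}{3}$-dumping paradox.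
   Context: A (connected) division for players $1,\dots,n$ of the cake $[0,1]$ is a sequence $(X_1,\dots,X_n)$ of pairwise disjoint open intervals (possibly empty), $X_i$ being player $i$'s piece; it is complete if the union of the closures of the $X_i$ equals $[0,1]$, and partial otherwise. Each player $i$ has a valuation $v_i$, a nonatomic probability measure on $[0,1]$; $u_i(x,j)=v_i(X_j)$. A division is envy-free if $u_i(x,i)\ge u_i(x,j)$ for all $i,j$. Egalitarian welfare: $eg(x)=\min_i u_i(x,i)$. For $\alpha>1$, an instance exhibits an egalitarian $\alpha$-dumping paradox if there is an envy-free partial division $y$ with $eg(y)\ge\alpha\,eg(x)$ for every envy-free complete division $x$. *)

theory Defs
  imports "HOL-Probability.Probability"
begin

definition valuation :: "real measure \<Rightarrow> bool" where
  "valuation M \<longleftrightarrow> prob_space M \<and> space M = {0..1}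
     \<and> sets M = sets (restrict_space borel {0..1::real})
     \<and> (\<forall>x. emeasure M {x} = 0)"

definition division :: "nat \<Rightarrow> (nat \<Rightarrow> real set) \<Rightarrow> bool" where
  "division n X \<longleftrightarrow>
     (\<forall>i\<in>{1..n}. \<exists>a b. 0 \<le> a \<and> a \<le> b \<and> b \<le> 1 \<and> X i = {a<..<b})
     \<and> (\<forall>i\<in>{1..n}. \<forall>j\<in>{1..n}. i \<noteq> j \<longrightarrow> X i \<inter> X j = {})"

definition complete_division :: "nat \<Rightarrow> (nat \<Rightarrow> real set) \<Rightarrow> bool" where
  "complete_division n X \<longleftrightarrow> division n X \<and> (\<Union>i\<in>{1..n}. closure (X i)) = {0..1}"

definition partial_division :: "nat \<Rightarrow> (nat \<Rightarrow> real set) \<Rightarrow> bool" where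
  "partial_division n X \<longleftrightarrow> division n X \<and> \<not> complete_division n X"

definition util :: "(nat \<Rightarrow> real measure) \<Rightarrow> (nat \<Rightarrow> real set) \<Rightarrow> nat \<Rightarrow> nat \<Rightarrow> real" where
  "util v X i j = measure (v i) (X j)"

definition envy_free :: "(nat \<Rightarrow> real measure) \<Rightarrow> nat \<Rightarrow> (nat \<Rightarrow> real set) \<Rightarrow> bool" where
  "envy_free v n X \<longleftrightarrow> (\<forall>i\<in>{1..n}. \<forall>j\<in>{1..n}. util v X i i \<ge> util v X i j)"

definition eg :: "(nat \<Rightarrow> real measure) \<Rightarrow> nat \<Rightarrow> (nat \<Rightarrow> real set) \<Rightarrow> real" where
  "eg v n X = Min ((\<lambda>i. util v X i i) ` {1..n})"

definition egal_dumping_paradox :: "(nat \<Rightarrow> real measure) \<Rightarrow> nat \<Rightarrow> real \<Rightarrow> bool" where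
  "egal_dumping_paradox v n \<alpha> \<longleftrightarrow>
     (\<exists>y. partial_division n y \<and> envy_free v n y \<and>
        (\<forall>x. complete_division n x \<and> envy_free v n x \<longrightarrow> eg v n y \<ge> \<alpha> * eg v n x))"

end

theory Submission
  imports Defs
begin

text \<open>
  Each valuation is encoded by its cumulative distribution
  F t = v((0,t)); since valuations are nonatomic, the value of any open interval is an
  increment of F, and the data of the instance determine F at all 14 breakpoints.

  (1) Upper bound: an envy-free complete division in which player 4 gets more than 1/4
  and player 3 more than \<epsilon> does not exist. Following player 4's piece from left to
  right, envy-freeness of players 1 and 2 pushes it to the right end of the cake, then
  pushes pieces 1 and 2 onto J2-J4 and J6-J8, and finally player 3 would envy them.
  So every envy-free complete division has welfare at most max (1/4) \<epsilon>.

  (2) Lower bound: the division discarding I is envy-free with welfare (1-\<epsilon>)/3, which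
  is 4(1-\<epsilon>)/3 times 1/4. When \<epsilon> \<ge> 1/4 the bound in (1) is \<epsilon> instead, and the
  division discarding J1 (welfare \<epsilon>) witnesses the paradox.
\<close>

text \<open>Values of intervals become differences of cdf values, which turns every
  comparison of pieces below into linear arithmetic.\<close>
definition cdf :: "real measure \<Rightarrow> real \<Rightarrow> real" where
  "cdf M t = measure M {0<..<t}"

lemma valuation_sets:
  assumes "valuation M" "A \<subseteq> {0..1}" "A \<in> sets borel"
  shows "A \<in> sets M"
  using assms unfolding valuation_def by (auto simp: sets_restrict_space_iff)

lemma valuation_point_null:
  assumes "valuation M" "0 \<le> x" "x \<le> 1"
  shows "{x} \<in> null_sets M"
  using assms valuation_sets[OF assms(1), of "{x}"] unfolding valuation_def
  by (auto simp: null_sets_def)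

lemma valuation_interval:
  assumes M: "valuation M" and st: "0 \<le> s" "s \<le> t" "t \<le> 1"
  shows "measure M {s<..<t} = cdf M t - cdf M s"
proof (cases "s = 0 \<or> s = t")
  case True
  then show ?thesis by (auto simp: cdf_def)
next
  case False
  then have s: "0 < s" "s < t" using st by auto
  interpret prob_space M using M unfolding valuation_def by auto
  have sets: "{0<..<s} \<in> sets M" "{s<..<t} \<in> sets M"
    using st by (auto intro!: valuation_sets[OF M])
  have "{0<..<t} = ({0<..<s} \<union> {s<..<t}) \<union> {s}" using s by auto
  then have "measure M {0<..<t} = measure M ({0<..<s} \<union> {s<..<t})"
    using sets st by (simp only:) (intro measure_Un_null_set valuation_point_null[OF M]; simp)
  also have "\<dots> = measure M {0<..<s} + measure M {s<..<t}"
    using sets by (intro finite_measure_Union) auto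
  finally show ?thesis by (simp add: cdf_def)
qed

lemma cdf_total:
  assumes M: "valuation M"
  shows "cdf M 1 = 1"
proof -
  interpret prob_space M using M unfolding valuation_def by auto
  have sets: "{0<..<1::real} \<in> sets M" "{0<..<1::real} \<union> {1} \<in> sets M"
    by (auto intro!: valuation_sets[OF M])
  have "1 = measure M {0..1::real}" using M prob_space unfolding valuation_def by auto
  also have "\<dots> = measure M (({0<..<1} \<union> {1}) \<union> {0})"
    by (rule arg_cong[where f = "measure M"]) auto
  also have "\<dots> = measure M ({0<..<1} \<union> {1})"
    using sets by (intro measure_Un_null_set valuation_point_null[OF M]) auto
  also have "\<dots> = measure M {0<..<1}"
    using sets by (intro measure_Un_null_set valuation_point_null[OF M]) auto
  finally show ?thesis by (simp add: cdf_def)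
qed

lemma cdf_increment_mono:
  assumes M: "valuation M" and "0 \<le> s'" "s' \<le> s" "s \<le> t" "t \<le> t'" "t' \<le> 1"
  shows "cdf M t - cdf M s \<le> cdf M t' - cdf M s'"
proof -
  interpret prob_space M using M unfolding valuation_def by auto
  have "measure M {s<..<t} \<le> measure M {s'<..<t'}"
    using assms by (intro finite_measure_mono valuation_sets[OF M]) auto
  with assms show ?thesis by (simp add: valuation_interval)
qed

definition interval_pieces :: "nat \<Rightarrow> (nat \<Rightarrow> real) \<Rightarrow> (nat \<Rightarrow> real) \<Rightarrow> bool" where
  "interval_pieces n a b \<longleftrightarrow> (\<forall>j\<in>{1..n}. 0 \<le> a j \<and> a j \<le> b j \<and> b j \<le> 1)"

definition separated :: "nat \<Rightarrow> (nat \<Rightarrow> real) \<Rightarrow> (nat \<Rightarrow> real) \<Rightarrow> bool" where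
  "separated n a b \<longleftrightarrow> (\<forall>j\<in>{1..n}. \<forall>k\<in>{1..n}. j \<noteq> k \<longrightarrow> b j \<le> a k \<or> b k \<le> a j)"

lemma division_intervals:
  assumes "division n x"
  obtains a b where "interval_pieces n a b" "\<forall>j\<in>{1..n}. x j = {a j<..<b j}"
proof -
  have "\<forall>j\<in>{1..n}. \<exists>a b. 0 \<le> a \<and> a \<le> b \<and> b \<le> 1 \<and> x j = {a<..<b}"
    using assms unfolding division_def by blast
  then obtain a b where "\<forall>j\<in>{1..n}. 0 \<le> a j \<and> a j \<le> b j \<and> b j \<le> 1 \<and> x j = {a j<..<b j}"
    by metis
  with that show ?thesis unfolding interval_pieces_def by blast
qed

lemma open_intervals_disjoint:
  fixes a b c d :: real
  assumes "{a<..<b} \<inter> {c<..<d} = {}" "a < b" "c < d"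
  shows "b \<le> c \<or> d \<le> a"
proof (rule ccontr)
  assume "\<not> (b \<le> c \<or> d \<le> a)"
  then have "(max a c + min b d) / 2 \<in> {a<..<b} \<inter> {c<..<d}"
    using assms(2,3) by (auto simp: max_def min_def)
  with assms(1) show False by blast
qed

lemma complete_division_covers:
  assumes "complete_division n x" "\<forall>j\<in>{1..n}. x j = {a j<..<b j}" "0 \<le> t" "t \<le> 1"
  shows "\<exists>j\<in>{1..n}. a j < b j \<and> a j \<le> t \<and> t \<le> b j"
proof -
  have "t \<in> (\<Union>j\<in>{1..n}. closure (x j))"
    using assms unfolding complete_division_def by auto
  then obtain j where j: "j \<in> {1..n}" "t \<in> closure {a j<..<b j}"
    using assms(2) by auto
  then have "a j < b j" by (cases "a j < b j") auto
  with j show ?thesis by auto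
qed

lemma closure_open_interval_subset: "closure {a<..<b} \<subseteq> {a..b::real}"
  by (rule closure_minimal) auto

lemma intervals_partial_division:
  assumes pieces: "interval_pieces n a b" and x: "\<forall>j\<in>{1..n}. x j = {a j<..<b j}"
    and sep: "separated n a b"
    and gap: "0 \<le> u" "u \<le> 1" "\<forall>j\<in>{1..n}. u < a j \<or> b j < u"
  shows "partial_division n x"
proof -
  have "division n x"
    unfolding division_def
  proof (intro conjI ballI impI)
    fix j k assume jk: "j \<in> {1..n}" "k \<in> {1..n}" "j \<noteq> k"
    have "b j \<le> a k \<or> b k \<le> a j" using sep jk unfolding separated_def by blast
    then show "x j \<inter> x k = {}" using x jk by auto
  next
    fix j assume "j \<in> {1..n}"
    then show "\<exists>a b. 0 \<le> a \<and> a \<le> b \<and> b \<le> 1 \<and> x j = {a<..<b}"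
      using pieces x unfolding interval_pieces_def by blast
  qed
  moreover have "u \<notin> (\<Union>j\<in>{1..n}. closure (x j))"
  proof
    assume "u \<in> (\<Union>j\<in>{1..n}. closure (x j))"
    then obtain j where j: "j \<in> {1..n}" "u \<in> closure (x j)" by blast
    have "x j = {a j<..<b j}" using x j(1) by blast
    then have "closure (x j) \<subseteq> {a j..b j}" using closure_open_interval_subset by simp
    moreover have "u < a j \<or> b j < u" using j(1) gap(3) by blast
    ultimately show False using j(2) by auto
  qed
  ultimately show ?thesis
    using gap(1,2) unfolding partial_division_def complete_division_def by auto
qed

lemma eg_le_util: "i \<in> {1..n} \<Longrightarrow> eg v n X \<le> util v X i i"
  unfolding eg_def by (rule Min_le) auto

lemma eg_eqI:
  assumes "i \<in> {1..n}" "util v X i i = w" "\<forall>j\<in>{1..n}. w \<le> util v X j j"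
  shows "eg v n X = w"
  unfolding eg_def using assms by (intro Min_eqI) auto

lemma players: "(1::nat) \<in> {1..4}" "(2::nat) \<in> {1..4}" "(3::nat) \<in> {1..4}" "(4::nat) \<in> {1..4}"
  by auto

lemma ball_1_4: "(\<forall>i\<in>{1..4::nat}. P i) \<longleftrightarrow> P 1 \<and> P 2 \<and> P 3 \<and> P 4"
proof -
  have "{1..4::nat} = {1,2,3,4}" by auto
  then show ?thesis by simp
qed

lemma interval_pieces_4:
  assumes "interval_pieces 4 a b"
  shows "0 \<le> a 1" "a 1 \<le> b 1" "b 1 \<le> 1" "0 \<le> a 2" "a 2 \<le> b 2" "b 2 \<le> 1"
    "0 \<le> a 3" "a 3 \<le> b 3" "b 3 \<le> 1" "0 \<le> a 4" "a 4 \<le> b 4" "b 4 \<le> 1"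
  using assms unfolding interval_pieces_def ball_1_4 by auto

lemma dumping_paradoxI:
  assumes "partial_division n y" "envy_free v n y"
    and "\<forall>x. complete_division n x \<and> envy_free v n x \<longrightarrow> eg v n x \<le> B"
    and "0 \<le> \<alpha>" "\<alpha> * B \<le> eg v n y"
  shows "egal_dumping_paradox v n \<alpha>"
  unfolding egal_dumping_paradox_def
proof (intro exI conjI allI impI)
  fix x assume "complete_division n x \<and> envy_free v n x"
  then have "\<alpha> * eg v n x \<le> \<alpha> * B" using assms(3,4) by (simp add: mult_left_mono)
  with assms(5) show "\<alpha> * eg v n x \<le> eg v n y" by linarith
qed (use assms in auto)

text \<open>The breakpoints p 0 < ... < p 14 delimit, from left to
  right, J1 J2 J3 J4 I J5 J6 J7 J8 J9 K1 K2 K3 K4; the listed values of each player sum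
  to 1, so every other block is worthless to that player.\<close>
context
  fixes \<epsilon> :: real and p :: "nat \<Rightarrow> real" and v :: "nat \<Rightarrow> real measure"
  assumes eps: "0 < \<epsilon>" "\<epsilon> < 1/3"
    and p0: "p 0 = 0" and p14: "p 14 = 1"
    and pmono: "\<forall>k<14. p k < p (Suc k)"
    and val: "\<forall>i\<in>{1..4}. valuation (v i)"
    and v4: "measure (v 4) {p 0<..<p 1} = 1/4" "measure (v 4) {p 5<..<p 6} = 1/4"
            "measure (v 4) {p 10<..<p 11} = 1/4" "measure (v 4) {p 13<..<p 14} = 1/4"
    and v3: "measure (v 3) {p 2<..<p 3} = (1-\<epsilon>)/3" "measure (v 3) {p 7<..<p 8} = (1-\<epsilon>)/3"
            "measure (v 3) {p 9<..<p 10} = (1-\<epsilon>)/3" "measure (v 3) {p 4<..<p 5} = \<epsilon>"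
    and v1: "measure (v 1) {p 1<..<p 2} = (1+\<epsilon>)/4" "measure (v 1) {p 3<..<p 4} = (1+\<epsilon>)/4"
            "measure (v 1) {p 11<..<p 12} = (1-\<epsilon>)/2"
    and v2: "measure (v 2) {p 6<..<p 7} = (1+\<epsilon>)/4" "measure (v 2) {p 8<..<p 9} = (1+\<epsilon>)/4"
            "measure (v 2) {p 12<..<p 13} = (1-\<epsilon>)/2"
begin

abbreviation F :: "nat \<Rightarrow> real \<Rightarrow> real" where
  "F i \<equiv> cdf (v i)"

lemma p_strict:
  "p 0 < p 1" "p 1 < p 2" "p 2 < p 3" "p 3 < p 4" "p 4 < p 5" "p 5 < p 6" "p 6 < p 7"
  "p 7 < p 8" "p 8 < p 9" "p 9 < p 10" "p 10 < p 11" "p 11 < p 12" "p 12 < p 13" "p 13 < p 14"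
  using pmono by (simp_all add: eval_nat_numeral)

lemma p_le: "j \<le> k \<Longrightarrow> k \<le> 14 \<Longrightarrow> p j \<le> p k"
proof (induction k)
  case (Suc k)
  show ?case
  proof (cases "j = Suc k")
    case False
    then have "p j \<le> p k" using Suc by simp
    moreover have "p k < p (Suc k)" using pmono Suc.prems(2) by simp
    ultimately show ?thesis by simp
  qed simp
qed simp

lemma p_range: "k \<le> 14 \<Longrightarrow> 0 \<le> p k" "k \<le> 14 \<Longrightarrow> p k \<le> 1"
  using p_le[of 0 k] p_le[of k 14] p0 p14 by auto

lemma F_within:
  "i \<in> {1..4} \<Longrightarrow> 0 \<le> s' \<Longrightarrow> s' \<le> s \<Longrightarrow> s \<le> t \<Longrightarrow> t \<le> t' \<Longrightarrow> t' \<le> 1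
   \<Longrightarrow> F i t - F i s \<le> F i t' - F i s'"
  using val cdf_increment_mono by blast

lemma mass: "i \<in> {1..4} \<Longrightarrow> 0 \<le> s \<Longrightarrow> s \<le> t \<Longrightarrow> t \<le> 1 \<Longrightarrow> measure (v i) {s<..<t} = F i t - F i s"
  using val valuation_interval by blast

lemma F_mono: "i \<in> {1..4} \<Longrightarrow> j \<le> k \<Longrightarrow> k \<le> 14 \<Longrightarrow> F i (p j) \<le> F i (p k)"
  using F_within[of i "p j" "p j" "p j" "p k"] p_le p_range by simp

lemma F_steps:
  assumes "i \<in> {1..4}"
  shows "F i (p 0) \<le> F i (p 1)" "F i (p 1) \<le> F i (p 2)" "F i (p 2) \<le> F i (p 3)"
    "F i (p 3) \<le> F i (p 4)" "F i (p 4) \<le> F i (p 5)" "F i (p 5) \<le> F i (p 6)"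
    "F i (p 6) \<le> F i (p 7)" "F i (p 7) \<le> F i (p 8)" "F i (p 8) \<le> F i (p 9)"
    "F i (p 9) \<le> F i (p 10)" "F i (p 10) \<le> F i (p 11)" "F i (p 11) \<le> F i (p 12)"
    "F i (p 12) \<le> F i (p 13)" "F i (p 13) \<le> F i (p 14)"
  using assms by (simp_all add: F_mono)

lemma F_ends: "i \<in> {1..4} \<Longrightarrow> F i (p 0) = 0" "i \<in> {1..4} \<Longrightarrow> F i (p 14) = 1"
  using val cdf_total by (auto simp: p0 p14 cdf_def)

lemma mass_p: "i \<in> {1..4} \<Longrightarrow> j \<le> k \<Longrightarrow> k \<le> 14
  \<Longrightarrow> measure (v i) {p j<..<p k} = F i (p k) - F i (p j)"
  by (simp add: mass p_le p_range)

lemma masses: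
  "F 1 (p 2) - F 1 (p 1) = (1+\<epsilon>)/4" "F 1 (p 4) - F 1 (p 3) = (1+\<epsilon>)/4"
  "F 1 (p 12) - F 1 (p 11) = (1-\<epsilon>)/2"
  "F 2 (p 7) - F 2 (p 6) = (1+\<epsilon>)/4" "F 2 (p 9) - F 2 (p 8) = (1+\<epsilon>)/4"
  "F 2 (p 13) - F 2 (p 12) = (1-\<epsilon>)/2"
  "F 3 (p 3) - F 3 (p 2) = (1-\<epsilon>)/3" "F 3 (p 8) - F 3 (p 7) = (1-\<epsilon>)/3"
  "F 3 (p 10) - F 3 (p 9) = (1-\<epsilon>)/3" "F 3 (p 5) - F 3 (p 4) = \<epsilon>"
  "F 4 (p 1) - F 4 (p 0) = 1/4" "F 4 (p 6) - F 4 (p 5) = 1/4"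
  "F 4 (p 11) - F 4 (p 10) = 1/4" "F 4 (p 14) - F 4 (p 13) = 1/4"
  by (simp_all only: v1 v2 v3 v4
      flip: mass_p[OF players(1)] mass_p[OF players(2)] mass_p[OF players(3)] mass_p[OF players(4)])

text \<open>The cdfs at the breakpoints: since each player's listed values already sum to 1,
  monotonicity forces all unlisted blocks to have value 0, which determines every entry.\<close>
lemma F1_table:
  shows "F 1 (p 0) = 0" "F 1 (p 1) = 0" "F 1 (p 2) = 1/4+\<epsilon>/4" "F 1 (p 3) = 1/4+\<epsilon>/4"
    "F 1 (p 4) = 1/2+\<epsilon>/2" "F 1 (p 5) = 1/2+\<epsilon>/2" "F 1 (p 6) = 1/2+\<epsilon>/2" "F 1 (p 7) = 1/2+\<epsilon>/2"
    "F 1 (p 8) = 1/2+\<epsilon>/2" "F 1 (p 9) = 1/2+\<epsilon>/2" "F 1 (p 10) = 1/2+\<epsilon>/2" "F 1 (p 11) = 1/2+\<epsilon>/2"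
    "F 1 (p 12) = 1" "F 1 (p 13) = 1" "F 1 (p 14) = 1"
  using masses F_steps[OF players(1)] F_ends[OF players(1)] eps by argo+

lemma F2_table:
  shows "F 2 (p 0) = 0" "F 2 (p 1) = 0" "F 2 (p 2) = 0" "F 2 (p 3) = 0"
    "F 2 (p 4) = 0" "F 2 (p 5) = 0" "F 2 (p 6) = 0" "F 2 (p 7) = 1/4+\<epsilon>/4"
    "F 2 (p 8) = 1/4+\<epsilon>/4" "F 2 (p 9) = 1/2+\<epsilon>/2" "F 2 (p 10) = 1/2+\<epsilon>/2" "F 2 (p 11) = 1/2+\<epsilon>/2"
    "F 2 (p 12) = 1/2+\<epsilon>/2" "F 2 (p 13) = 1" "F 2 (p 14) = 1"
  using masses F_steps[OF players(2)] F_ends[OF players(2)] eps by argo+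

lemma F3_table:
  shows "F 3 (p 0) = 0" "F 3 (p 1) = 0" "F 3 (p 2) = 0" "F 3 (p 3) = 1/3-\<epsilon>/3"
    "F 3 (p 4) = 1/3-\<epsilon>/3" "F 3 (p 5) = 1/3+2*\<epsilon>/3" "F 3 (p 6) = 1/3+2*\<epsilon>/3" "F 3 (p 7) = 1/3+2*\<epsilon>/3"
    "F 3 (p 8) = 2/3+\<epsilon>/3" "F 3 (p 9) = 2/3+\<epsilon>/3" "F 3 (p 10) = 1" "F 3 (p 11) = 1"
    "F 3 (p 12) = 1" "F 3 (p 13) = 1" "F 3 (p 14) = 1"
  using masses F_steps[OF players(3)] F_ends[OF players(3)] eps by argo+

lemma F4_table:
  shows "F 4 (p 0) = 0" "F 4 (p 1) = 1/4" "F 4 (p 2) = 1/4" "F 4 (p 3) = 1/4"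
    "F 4 (p 4) = 1/4" "F 4 (p 5) = 1/4" "F 4 (p 6) = 1/2" "F 4 (p 7) = 1/2"
    "F 4 (p 8) = 1/2" "F 4 (p 9) = 1/2" "F 4 (p 10) = 1/2" "F 4 (p 11) = 3/4"
    "F 4 (p 12) = 3/4" "F 4 (p 13) = 3/4" "F 4 (p 14) = 1"
  using masses F_steps[OF players(4)] F_ends[OF players(4)] eps by argo+

abbreviation worth :: "(nat \<Rightarrow> real) \<Rightarrow> (nat \<Rightarrow> real) \<Rightarrow> nat \<Rightarrow> nat \<Rightarrow> real" where
  "worth a b i j \<equiv> F i (b j) - F i (a j)"

lemma worth_le:
  "interval_pieces 4 a b \<Longrightarrow> i \<in> {1..4} \<Longrightarrow> j \<in> {1..4} \<Longrightarrow> 0 \<le> s \<Longrightarrow> s \<le> a j \<Longrightarrow> b j \<le> t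
   \<Longrightarrow> t \<le> 1 \<Longrightarrow> worth a b i j \<le> F i t - F i s"
  unfolding interval_pieces_def by (intro F_within) auto

lemma worth_ge:
  "interval_pieces 4 a b \<Longrightarrow> i \<in> {1..4} \<Longrightarrow> j \<in> {1..4} \<Longrightarrow> a j \<le> s \<Longrightarrow> s \<le> t \<Longrightarrow> t \<le> b j
   \<Longrightarrow> F i t - F i s \<le> worth a b i j"
  unfolding interval_pieces_def by (intro F_within) auto

text \<open>Player 4 values only J1, J5, K1, K4,
  each at 1/4, so her piece must meet two of them.\<close>
lemma piece4_span:
  assumes ab: "interval_pieces 4 a b" and rich4: "1/4 < worth a b 4 4"
  shows "p 5 < b 4" "a 4 < p 11"
proof -
  note B = interval_pieces_4[OF ab]
  show "p 5 < b 4"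
  proof (rule ccontr)
    assume "\<not> p 5 < b 4"
    then have "worth a b 4 4 \<le> F 4 (p 5) - F 4 (p 0)"
      using B by (intro worth_le[OF ab]) (auto simp: p0 p_range)
    with rich4 F4_table show False by argo
  qed
  show "a 4 < p 11"
  proof (rule ccontr)
    assume "\<not> a 4 < p 11"
    then have "worth a b 4 4 \<le> F 4 (p 14) - F 4 (p 11)"
      using B by (intro worth_le[OF ab]) (auto simp: p14 p_range)
    with rich4 F4_table show False by argo
  qed
qed

text \<open>If player 4's piece started inside J1 it would contain J2 \<union> J3 \<union> J4, worth (1+\<epsilon>)/2 to
  player 1, who could not find an equally good piece beside it.\<close>
lemma piece4_after_J1:
  assumes ab: "interval_pieces 4 a b" and rich4: "1/4 < worth a b 4 4"
    and envy: "worth a b 1 4 \<le> worth a b 1 1" and sep: "b 1 \<le> a 4 \<or> b 4 \<le> a 1"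
  shows "p 1 \<le> a 4"
proof (rule ccontr)
  assume a4: "\<not> p 1 \<le> a 4"
  note B = interval_pieces_4[OF ab] and span = piece4_span[OF ab rich4]
  have "F 1 (p 5) - F 1 (p 1) \<le> worth a b 1 4"
    using a4 span B by (intro worth_ge[OF ab]) (auto simp: p_le)
  then have big: "1/2+\<epsilon>/2 \<le> worth a b 1 1" using envy F1_table by argo
  from sep show False
  proof
    assume "b 1 \<le> a 4"
    then have "worth a b 1 1 \<le> F 1 (p 1) - F 1 (p 0)"
      using a4 B by (intro worth_le[OF ab]) (auto simp: p0 p_range)
    with big eps F1_table show False by argo
  next
    assume "b 4 \<le> a 1"
    then have "worth a b 1 1 \<le> F 1 (p 14) - F 1 (p 5)"
      using span B by (intro worth_le[OF ab]) (auto simp: p14 p_range)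
    with big eps F1_table show False by argo
  qed
qed

text \<open>Similarly, starting inside J5 the piece would contain J6 \<union> J7 \<union> J8, worth (1+\<epsilon>)/2 to
  player 2.\<close>
lemma piece4_after_J5:
  assumes ab: "interval_pieces 4 a b" and rich4: "1/4 < worth a b 4 4" and a4: "p 1 \<le> a 4"
    and envy: "worth a b 2 4 \<le> worth a b 2 2" and sep: "b 2 \<le> a 4 \<or> b 4 \<le> a 2"
  shows "p 6 \<le> a 4"
proof (rule ccontr)
  assume a4': "\<not> p 6 \<le> a 4"
  note B = interval_pieces_4[OF ab]
  have b4: "p 10 < b 4"
  proof (rule ccontr)
    assume "\<not> p 10 < b 4"
    then have "worth a b 4 4 \<le> F 4 (p 10) - F 4 (p 1)"
      using a4 B by (intro worth_le[OF ab]) (auto simp: p_range)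
    with rich4 F4_table show False by argo
  qed
  have "F 2 (p 10) - F 2 (p 6) \<le> worth a b 2 4"
    using a4' b4 B by (intro worth_ge[OF ab]) (auto simp: p_le)
  then have big: "1/2+\<epsilon>/2 \<le> worth a b 2 2" using envy F2_table by argo
  from sep show False
  proof
    assume "b 2 \<le> a 4"
    then have "worth a b 2 2 \<le> F 2 (p 6) - F 2 (p 0)"
      using a4' B by (intro worth_le[OF ab]) (auto simp: p0 p_range)
    with big eps F2_table show False by argo
  next
    assume "b 4 \<le> a 2"
    then have "worth a b 2 2 \<le> F 2 (p 14) - F 2 (p 10)"
      using b4 B by (intro worth_le[OF ab]) (auto simp: p14 p_range)
    with big eps F2_table show False by argo
  qed
qed

text \<open>Hence player 4's piece starts after J5, so it must reach into K4 and contains K2 \<union> K3.\<close>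
lemma piece4_covers_K23:
  assumes ab: "interval_pieces 4 a b" and rich4: "1/4 < worth a b 4 4" and a4: "p 6 \<le> a 4"
  shows "p 13 < b 4"
proof (rule ccontr)
  assume "\<not> p 13 < b 4"
  then have "worth a b 4 4 \<le> F 4 (p 13) - F 4 (p 6)"
    using a4 interval_pieces_4[OF ab] by (intro worth_le[OF ab]) (auto simp: p_range)
  with rich4 F4_table show False by argo
qed

text \<open>A player who values K2 \<union> K3 at (1-\<epsilon>)/2 and K4 at nothing (players 1 and 2) then
  values player 4's piece at (1-\<epsilon>)/2 at least, so she needs as much for herself; this forces
  her piece to the left of player 4's.\<close>
lemma rival_left_of_piece4:
  assumes ab: "interval_pieces 4 a b" and rich4: "1/4 < worth a b 4 4" and a4: "p 6 \<le> a 4"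
    and i: "i \<in> {1..4}" and K23: "F i (p 13) - F i (p 11) = 1/2-\<epsilon>/2" and K4: "F i (p 14) = F i (p 13)"
    and envy: "worth a b i 4 \<le> worth a b i i" and sep: "b i \<le> a 4 \<or> b 4 \<le> a i"
  shows "1/2-\<epsilon>/2 \<le> worth a b i i" "b i \<le> a 4"
proof -
  note B = interval_pieces_4[OF ab]
  have Bi: "0 \<le> a i" "a i \<le> b i" "b i \<le> 1" using ab i unfolding interval_pieces_def by auto
  have K: "a 4 < p 11" "p 13 < b 4" using piece4_span[OF ab rich4] piece4_covers_K23[OF ab rich4 a4] by auto
  have "F i (p 13) - F i (p 11) \<le> worth a b i 4"
    using K B Bi i by (intro worth_ge[OF ab]) (auto simp: p_le)
  then show big: "1/2-\<epsilon>/2 \<le> worth a b i i" using envy K23 by argo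
  show "b i \<le> a 4"
  proof (rule ccontr)
    assume "\<not> b i \<le> a 4"
    with sep have "b 4 \<le> a i" by simp
    then have "worth a b i i \<le> F i (p 14) - F i (p 13)"
      using K B Bi i by (intro worth_le[OF ab]) (auto simp: p14 p_range)
    with big eps K4 show False by argo
  qed
qed

text \<open>Left of K1, player 1 reaches (1-\<epsilon>)/2 only by taking J3 together with parts of J2 and J4.\<close>
lemma piece1_location:
  assumes ab: "interval_pieces 4 a b" and big: "1/2-\<epsilon>/2 \<le> worth a b 1 1" and b1: "b 1 \<le> p 11"
  shows "a 1 < p 2" "p 3 < b 1"
proof -
  note B = interval_pieces_4[OF ab]
  show "a 1 < p 2"
  proof (rule ccontr)
    assume "\<not> a 1 < p 2"
    then have "worth a b 1 1 \<le> F 1 (p 11) - F 1 (p 2)"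
      using b1 B by (intro worth_le[OF ab]) (auto simp: p_range)
    with big eps F1_table show False by argo
  qed
  show "p 3 < b 1"
  proof (rule ccontr)
    assume "\<not> p 3 < b 1"
    then have "worth a b 1 1 \<le> F 1 (p 3) - F 1 (p 0)"
      using B by (intro worth_le[OF ab]) (auto simp: p0 p_range)
    with big eps F1_table show False by argo
  qed
qed

text \<open>Likewise player 2 must take J7 together with parts of J6 and J8.\<close>
lemma piece2_location:
  assumes ab: "interval_pieces 4 a b" and big: "1/2-\<epsilon>/2 \<le> worth a b 2 2" and b2: "b 2 \<le> p 11"
  shows "a 2 < p 7" "p 8 < b 2"
proof -
  note B = interval_pieces_4[OF ab]
  show "a 2 < p 7"
  proof (rule ccontr)
    assume "\<not> a 2 < p 7"
    then have "worth a b 2 2 \<le> F 2 (p 11) - F 2 (p 7)"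
      using b2 B by (intro worth_le[OF ab]) (auto simp: p_range)
    with big eps F2_table show False by argo
  qed
  show "p 8 < b 2"
  proof (rule ccontr)
    assume "\<not> p 8 < b 2"
    then have "worth a b 2 2 \<le> F 2 (p 8) - F 2 (p 0)"
      using B by (intro worth_le[OF ab]) (auto simp: p0 p_range)
    with big eps F2_table show False by argo
  qed
qed

text \<open>Player 3 values nothing left of J3, and only I between J3 and J7, which is not enough;
  so her piece lies to the right of player 2's.\<close>
lemma piece3_rightmost:
  assumes ab: "interval_pieces 4 a b" and rich3: "\<epsilon> < worth a b 3 3"
    and loc: "a 1 < p 2" "p 3 < b 1" "a 2 < p 7" and b1a2: "b 1 \<le> a 2"
    and sep13: "b 1 \<le> a 3 \<or> b 3 \<le> a 1" and sep23: "b 2 \<le> a 3 \<or> b 3 \<le> a 2"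
  shows "b 2 \<le> a 3"
proof -
  note B = interval_pieces_4[OF ab]
  have b1a3: "b 1 \<le> a 3"
  proof (rule ccontr)
    assume "\<not> b 1 \<le> a 3"
    with sep13 have "b 3 \<le> a 1" by simp
    then have "worth a b 3 3 \<le> F 3 (p 2) - F 3 (p 0)"
      using loc B by (intro worth_le[OF ab]) (auto simp: p0 p_range)
    with rich3 eps F3_table show False by argo
  qed
  show "b 2 \<le> a 3"
  proof (rule ccontr)
    assume "\<not> b 2 \<le> a 3"
    with sep23 have "b 3 \<le> a 2" by simp
    then have "worth a b 3 3 \<le> F 3 (p 7) - F 3 (p 3)"
      using loc b1a3 B by (intro worth_le[OF ab]) (auto simp: p_range)
    with rich3 F3_table show False by argo
  qed
qed

text \<open>Pieces 1 and 2 must then be adjacent (no gap can be left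
  uncovered), so together they contain J3 \<union> I \<union> J7, worth (2+\<epsilon>)/3 to player 3, while she
  herself gets at most J9, worth (1-\<epsilon>)/3.\<close>
lemma no_rich_configuration:
  assumes ab: "interval_pieces 4 a b" and sep: "separated 4 a b"
    and cover: "\<forall>t\<in>{0..1}. \<exists>j\<in>{1..4}. a j \<le> t \<and> t \<le> b j"
    and envy: "\<forall>i\<in>{1..4}. \<forall>j\<in>{1..4}. worth a b i j \<le> worth a b i i"
    and rich4: "1/4 < worth a b 4 4" and rich3: "\<epsilon> < worth a b 3 3"
  shows False
proof -
  note B = interval_pieces_4[OF ab]
  have sep': "b i \<le> a j \<or> b j \<le> a i" if "i \<in> {1..4}" "j \<in> {1..4}" "i \<noteq> j" for i j
    using sep that unfolding separated_def by blast
  have envy': "worth a b i j \<le> worth a b i i" if "i \<in> {1..4}" "j \<in> {1..4}" for i j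
    using envy that by blast
  have "p 1 \<le> a 4"
    using piece4_after_J1[OF ab rich4 envy'[of 1 4] sep'[of 1 4]] by simp
  then have a4: "p 6 \<le> a 4"
    using piece4_after_J5[OF ab rich4 _ envy'[of 2 4] sep'[of 2 4]] by simp
  have rival1: "1/2-\<epsilon>/2 \<le> worth a b 1 1" "b 1 \<le> a 4"
    using rival_left_of_piece4[OF ab rich4 a4 players(1)] envy'[of 1 4] sep'[of 1 4] F1_table
    by simp_all
  have rival2: "1/2-\<epsilon>/2 \<le> worth a b 2 2" "b 2 \<le> a 4"
    using rival_left_of_piece4[OF ab rich4 a4 players(2)] envy'[of 2 4] sep'[of 2 4] F2_table
    by simp_all
  have a4': "a 4 < p 11" using piece4_span[OF ab rich4] by simp
  have loc1: "a 1 < p 2" "p 3 < b 1" using piece1_location[OF ab rival1(1)] rival1(2) a4' by simp_all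
  have loc2: "a 2 < p 7" "p 8 < b 2" using piece2_location[OF ab rival2(1)] rival2(2) a4' by simp_all
  have b1a2: "b 1 \<le> a 2" using sep'[of 1 2] loc1 loc2 p_strict by simp
  have b2a3: "b 2 \<le> a 3"
    using piece3_rightmost[OF ab rich3 loc1 loc2(1) b1a2] sep'[of 1 3] sep'[of 2 3] by simp
  have "b 1 = a 2"
  proof (rule ccontr)
    assume "b 1 \<noteq> a 2"
    then have gap: "b 1 < (b 1 + a 2) / 2" "(b 1 + a 2) / 2 < a 2" using b1a2 by auto
    moreover have "(b 1 + a 2) / 2 \<in> {0..1}" using gap B by simp
    ultimately obtain j where j: "j \<in> {1..4}" "a j \<le> (b 1 + a 2) / 2" "(b 1 + a 2) / 2 \<le> b j"
      using cover by blast
    then have "j = 1 \<or> j = 2 \<or> j = 3 \<or> j = 4" by auto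
    then show False using j gap b2a3 rival2(2) B by auto
  qed
  then have touch: "F 3 (b 1) = F 3 (a 2)" by simp
  have "F 3 (p 8) - F 3 (p 2) \<le> F 3 (b 2) - F 3 (a 1)"
    using loc1 loc2 B by (intro F_within) (auto simp: p_le)
  moreover have "worth a b 3 3 \<le> F 3 (p 14) - F 3 (p 8)"
    using loc2 b2a3 B by (intro worth_le[OF ab]) (auto simp: p14 p_range)
  moreover have "worth a b 3 1 \<le> worth a b 3 3" "worth a b 3 2 \<le> worth a b 3 3"
    using envy'[of 3 1] envy'[of 3 2] by simp_all
  ultimately show False using touch eps F3_table by argo
qed

lemma breakpoints_partial_division:
  assumes X: "\<forall>j\<in>{1..4}. X j = {p (l j)<..<p (r j)}" and lr: "\<forall>j\<in>{1..4}. l j \<le> r j \<and> r j \<le> 14"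
    and sep: "\<forall>j\<in>{1..4}. \<forall>k\<in>{1..4}. j \<noteq> k \<longrightarrow> r j \<le> l k \<or> r k \<le> l j"
    and gap: "m < 14" "\<forall>j\<in>{1..4}. r j \<le> m \<or> Suc m \<le> l j"
  shows "partial_division 4 X"
proof (rule intervals_partial_division)
  show "interval_pieces 4 (\<lambda>j. p (l j)) (\<lambda>j. p (r j))"
    unfolding interval_pieces_def
  proof
    fix j :: nat assume "j \<in> {1..4}"
    then have "l j \<le> r j" "r j \<le> 14" using lr by auto
    then show "0 \<le> p (l j) \<and> p (l j) \<le> p (r j) \<and> p (r j) \<le> 1" by (simp add: p_le p_range)
  qed
  show "separated 4 (\<lambda>j. p (l j)) (\<lambda>j. p (r j))"
    unfolding separated_def
  proof (intro ballI impI)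
    fix j k :: nat assume jk: "j \<in> {1..4}" "k \<in> {1..4}" "j \<noteq> k"
    have "r j \<le> l k \<or> r k \<le> l j" using sep jk by blast
    moreover have "l j \<le> r j" "r j \<le> 14" "l k \<le> r k" "r k \<le> 14" using lr jk by auto
    ultimately show "p (r j) \<le> p (l k) \<or> p (r k) \<le> p (l j)" using p_le by auto
  qed
  have "p m < p (Suc m)" using pmono gap(1) by simp
  then show "0 \<le> (p m + p (Suc m)) / 2" "(p m + p (Suc m)) / 2 \<le> 1"
    using p_range[of m] p_range[of "Suc m"] gap(1) by auto
  show "\<forall>j\<in>{1..4}. (p m + p (Suc m)) / 2 < p (l j) \<or> p (r j) < (p m + p (Suc m)) / 2"
  proof
    fix j :: nat assume j: "j \<in> {1..4}"
    have "r j \<le> m \<or> Suc m \<le> l j" using gap j by blast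
    moreover have "l j \<le> r j" "r j \<le> 14" using lr j by auto
    ultimately have "p (r j) \<le> p m \<or> p (Suc m) \<le> p (l j)" using gap(1) p_le by auto
    with \<open>p m < p (Suc m)\<close> show "(p m + p (Suc m)) / 2 < p (l j) \<or> p (r j) < (p m + p (Suc m)) / 2"
      by auto
  qed
qed (use X in simp)

lemma util_intervals:
  assumes "interval_pieces 4 a b" "\<forall>j\<in>{1..4}. X j = {a j<..<b j}" "i \<in> {1..4}" "j \<in> {1..4}"
  shows "util v X i j = worth a b i j"
  using assms unfolding interval_pieces_def util_def by (simp add: mass)

lemma complete_envy_free_welfare:
  assumes cd: "complete_division 4 x" and ef: "envy_free v 4 x"
  shows "eg v 4 x \<le> max (1/4) \<epsilon>"
proof (rule ccontr)
  assume high: "\<not> eg v 4 x \<le> max (1/4) \<epsilon>"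
  obtain a b where ab: "interval_pieces 4 a b" and x: "\<forall>j\<in>{1..4}. x j = {a j<..<b j}"
    using cd division_intervals unfolding complete_division_def by metis
  note U = util_intervals[OF ab x]
  have rich: "max (1/4) \<epsilon> < worth a b i i" if "i \<in> {1..4}" for i
    using eg_le_util[OF that, of v x] U[OF that that] high by linarith
  have nonempty: "a j < b j" if "j \<in> {1..4}" for j
  proof (rule ccontr)
    assume "\<not> a j < b j"
    then have "worth a b j j = 0" using ab that unfolding interval_pieces_def by force
    with rich[OF that] show False by linarith
  qed
  have sep: "separated 4 a b"
    unfolding separated_def
  proof (intro ballI impI)
    fix j k :: nat assume jk: "j \<in> {1..4}" "k \<in> {1..4}" "j \<noteq> k"
    then have "{a j<..<b j} \<inter> {a k<..<b k} = {}"
      using cd x unfolding complete_division_def division_def by force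
    then show "b j \<le> a k \<or> b k \<le> a j"
      using open_intervals_disjoint nonempty jk by blast
  qed
  have cover: "\<forall>t\<in>{0..1}. \<exists>j\<in>{1..4}. a j \<le> t \<and> t \<le> b j"
    using complete_division_covers[OF cd x] by fastforce
  have envy: "\<forall>i\<in>{1..4}. \<forall>j\<in>{1..4}. worth a b i j \<le> worth a b i i"
    using ef U unfolding envy_free_def by auto
  show False
    using no_rich_configuration[OF ab sep cover envy] rich[of 4] rich[of 3] by simp
qed

lemma dumping_division:
  assumes y: "y 1 = {p 0<..<p 4}" "y 2 = {p 5<..<p 9}" "y 3 = {p 9<..<p 10}" "y 4 = {p 10<..<p 14}"
  shows "partial_division 4 y" "envy_free v 4 y" "eg v 4 y = 1/3 - \<epsilon>/3"
proof -
  show "partial_division 4 y"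
    by (rule breakpoints_partial_division[where l = "\<lambda>j. [0,0,5,9,10] ! j"
          and r = "\<lambda>j. [0,4,9,10,14] ! j" and m = 4]) (use y in \<open>unfold ball_1_4, simp_all\<close>)
  have U:
    "util v y 1 1 = F 1 (p 4) - F 1 (p 0)" "util v y 1 2 = F 1 (p 9) - F 1 (p 5)"
    "util v y 1 3 = F 1 (p 10) - F 1 (p 9)" "util v y 1 4 = F 1 (p 14) - F 1 (p 10)"
    "util v y 2 1 = F 2 (p 4) - F 2 (p 0)" "util v y 2 2 = F 2 (p 9) - F 2 (p 5)"
    "util v y 2 3 = F 2 (p 10) - F 2 (p 9)" "util v y 2 4 = F 2 (p 14) - F 2 (p 10)"
    "util v y 3 1 = F 3 (p 4) - F 3 (p 0)" "util v y 3 2 = F 3 (p 9) - F 3 (p 5)"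
    "util v y 3 3 = F 3 (p 10) - F 3 (p 9)" "util v y 3 4 = F 3 (p 14) - F 3 (p 10)"
    "util v y 4 1 = F 4 (p 4) - F 4 (p 0)" "util v y 4 2 = F 4 (p 9) - F 4 (p 5)"
    "util v y 4 3 = F 4 (p 10) - F 4 (p 9)" "util v y 4 4 = F 4 (p 14) - F 4 (p 10)"
    unfolding util_def y by (simp_all add: mass_p)
  show "envy_free v 4 y"
    unfolding envy_free_def ball_1_4 using U F1_table F2_table F3_table F4_table eps
    by (intro conjI; argo)
  show "eg v 4 y = 1/3 - \<epsilon>/3"
  proof (rule eg_eqI[of 3])
    show "(3::nat) \<in> {1..4}" by simp
    show "util v y 3 3 = 1/3 - \<epsilon>/3" using U F3_table by linarith
    show "\<forall>j\<in>{1..4}. 1/3 - \<epsilon>/3 \<le> util v y j j"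
      unfolding ball_1_4 using U F1_table F2_table F3_table F4_table eps by (intro conjI; argo)
  qed
qed

text \<open>For \<epsilon> \<ge> 1/4 the bound of complete_envy_free_welfare is \<epsilon>, and a different dump is
  needed: discarding J1 and giving I to player 3 yields an envy-free division with welfare \<epsilon>.\<close>
lemma discard_J1_division:
  assumes large: "1/4 \<le> \<epsilon>"
    and z: "z 1 = {p 1<..<p 4}" "z 2 = {p 5<..<p 9}" "z 3 = {p 4<..<p 5}" "z 4 = {p 9<..<p 14}"
  shows "partial_division 4 z" "envy_free v 4 z" "eg v 4 z = \<epsilon>"
proof -
  show "partial_division 4 z"
    by (rule breakpoints_partial_division[where l = "\<lambda>j. [0,1,5,4,9] ! j"
          and r = "\<lambda>j. [0,4,9,5,14] ! j" and m = 0]) (use z in \<open>unfold ball_1_4, simp_all\<close>)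
  have U:
    "util v z 1 1 = F 1 (p 4) - F 1 (p 1)" "util v z 1 2 = F 1 (p 9) - F 1 (p 5)"
    "util v z 1 3 = F 1 (p 5) - F 1 (p 4)" "util v z 1 4 = F 1 (p 14) - F 1 (p 9)"
    "util v z 2 1 = F 2 (p 4) - F 2 (p 1)" "util v z 2 2 = F 2 (p 9) - F 2 (p 5)"
    "util v z 2 3 = F 2 (p 5) - F 2 (p 4)" "util v z 2 4 = F 2 (p 14) - F 2 (p 9)"
    "util v z 3 1 = F 3 (p 4) - F 3 (p 1)" "util v z 3 2 = F 3 (p 9) - F 3 (p 5)"
    "util v z 3 3 = F 3 (p 5) - F 3 (p 4)" "util v z 3 4 = F 3 (p 14) - F 3 (p 9)"
    "util v z 4 1 = F 4 (p 4) - F 4 (p 1)" "util v z 4 2 = F 4 (p 9) - F 4 (p 5)"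
    "util v z 4 3 = F 4 (p 5) - F 4 (p 4)" "util v z 4 4 = F 4 (p 14) - F 4 (p 9)"
    unfolding util_def z by (simp_all add: mass_p)
  show "envy_free v 4 z"
    unfolding envy_free_def ball_1_4 using U F1_table F2_table F3_table F4_table eps large
    by (intro conjI; argo)
  show "eg v 4 z = \<epsilon>"
  proof (rule eg_eqI[of 3])
    show "(3::nat) \<in> {1..4}" by simp
    show "util v z 3 3 = \<epsilon>" using U F3_table by linarith
    show "\<forall>j\<in>{1..4}. \<epsilon> \<le> util v z j j"
      unfolding ball_1_4 using U F1_table F2_table F3_table F4_table eps by (intro conjI; argo)
  qed
qed

end

theorem lemma5:
  fixes \<epsilon> :: real and p :: "nat \<Rightarrow> real" and v :: "nat \<Rightarrow> real measure"
    and y :: "nat \<Rightarrow> real set"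
  assumes eps: "0 < \<epsilon>" "\<epsilon> < 1/3"
    and p0: "p 0 = 0" and p14: "p 14 = 1"
    and pmono: "\<forall>k<14. p k < p (Suc k)"
    and val: "\<forall>i\<in>{1..4}. valuation (v i)"
    \<comment> \<open>intervals, left to right: J1=(p0,p1) J2 J3 J4 I=(p4,p5) J5=(p5,p6) J6 J7 J8 J9=(p9,p10) K1=(p10,p11) K2 K3 K4=(p13,p14)\<close>
    and v4: "measure (v 4) {p 0<..<p 1} = 1/4" "measure (v 4) {p 5<..<p 6} = 1/4"
            "measure (v 4) {p 10<..<p 11} = 1/4" "measure (v 4) {p 13<..<p 14} = 1/4"
    and v3: "measure (v 3) {p 2<..<p 3} = (1-\<epsilon>)/3" "measure (v 3) {p 7<..<p 8} = (1-\<epsilon>)/3"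
            "measure (v 3) {p 9<..<p 10} = (1-\<epsilon>)/3" "measure (v 3) {p 4<..<p 5} = \<epsilon>"
    and v1: "measure (v 1) {p 1<..<p 2} = (1+\<epsilon>)/4" "measure (v 1) {p 3<..<p 4} = (1+\<epsilon>)/4"
            "measure (v 1) {p 11<..<p 12} = (1-\<epsilon>)/2"
    and v2: "measure (v 2) {p 6<..<p 7} = (1+\<epsilon>)/4" "measure (v 2) {p 8<..<p 9} = (1+\<epsilon>)/4"
            "measure (v 2) {p 12<..<p 13} = (1-\<epsilon>)/2"
    and y: "y 1 = {p 0<..<p 4}" "y 2 = {p 5<..<p 9}" "y 3 = {p 9<..<p 10}" "y 4 = {p 10<..<p 14}"
  shows "partial_division 4 y \<and> envy_free v 4 y \<and> eg v 4 y = (1-\<epsilon>)/3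
         \<and> egal_dumping_paradox v 4 (4*(1-\<epsilon>)/3)"
proof -
  note Y = dumping_division[OF eps p0 p14 pmono val v4 v3 v1 v2 y]
  have bound: "\<forall>x. complete_division 4 x \<and> envy_free v 4 x \<longrightarrow> eg v 4 x \<le> max (1/4) \<epsilon>"
    using complete_envy_free_welfare[OF eps p0 p14 pmono val v4 v3 v1 v2] by blast
  have "egal_dumping_paradox v 4 (4*(1-\<epsilon>)/3)"
  proof (cases "\<epsilon> < 1/4")
    case True
    then show ?thesis
      using dumping_paradoxI[OF Y(1,2), of "1/4"] bound Y(3) eps by auto
  next
    case False
    define z where "z j = (if j = 1 then {p 1<..<p 4} else if j = 2 then {p 5<..<p 9}
      else if j = 3 then {p 4<..<p 5} else {p 9<..<p 14})" for j :: nat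
    note Z = discard_J1_division[OF eps p0 p14 pmono val v4 v3 v1 v2, of z]
    have "4*(1-\<epsilon>)/3 * \<epsilon> \<le> 1 * \<epsilon>" using False eps by (intro mult_right_mono) auto
    with False show ?thesis
      using dumping_paradoxI[of 4 z v "max (1/4) \<epsilon>"] Z bound eps by (simp add: z_def)
  qed
  with Y show ?thesis by simp
qed

end
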